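(* Fix a horizon $T>0$ and let $\underline V := \min_{r} V(r,T)$ (assumed attained). For $\tau\in[0,T]$ define the tracking error bound $$\mathcal B(\tau) := \{ r : V(r, T-\tau) \le \underline V\}.$$ Then for every $t\in[0,T]$, every $t'\in[t,T]$ and every relative state $r$, $$ r\in \mathcal B(t) \ \Longrightarrow\ \xi^*(t'; r, t)\in \mathcal B(t').$$
   Context: Relative system: $\dot r = g(r,u_s,u_p,d)$ on $\mathbb R^{n_r}$, with $g$ time-invariant and Lipschitz continuous in $r$ for fixed controls/disturbance; tracking control $u_s(t)\in\mathcal U_s$, planning control $u_p(t)\in\mathcal U_p$, disturbance $d(t)\in\mathcal D$, all compact sets; admissible signals are measurable functions of time into these sets. $\xi_g(s; r, t_0, u_s(\cdot),u_p(\cdot),d(\cdot))$ denotes the (unique) solution at time $s\ge t_0$ starting from $r$ at time $t_0$. Non-anticipative strategies $\gamma_p\in\Gamma_p$, $\gamma_d\in\Gamma_d$ map tracking-control signals to planning-control and disturbance signals. Given a continuous error function $l$ on the relative state space, the value function is $$V(r,\tau)=\sup_{\gamma_p\in\Gamma_p,\gamma_d\in\Gamma_d}\ \inf_{u_s(\cdot)}\ \max_{s\in[0,\tau]} l\big(\xi_g(s; r,0,u_s(\cdot),\gamma_p[u_s](\cdot),\gamma_d[u_s](\cdot))\big).$$ Standing assumption: for each initial state $r$ and initial time $t\in[0,T]$, optimal tracking control, planning strategy and disturbance strategy on $[t,T]$ exist (attaining the inf/sup above with the time interval $[t,T]$), and $\xi^*(s;r,t)$, $s\in[t,T]$, denotes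 the resulting optimal relative trajectory, so that $V(r,T-t)=\max_{s\in[t,T]} l(\xi^*(s;r,t))$; moreover optimal play is time-consistent: for $t\le t'\le s\le T$, $\xi^*(s;r,t)=\xi^*(s;\xi^*(t';r,t),t')$, and by time invariance $\xi^*(s;r,t)=\xi^*(s-t;r,0)$ (interpreted with horizon shifted accordingly). *)

theory Defs
  imports "HOL-Analysis.Analysis"
begin

definition admissible :: "'a::euclidean_space set \<Rightarrow> (real \<Rightarrow> 'a) set" where
  "admissible U = {u. u \<in> borel_measurable lborel \<and> (\<forall>t. u t \<in> U)}"

definition nonanticipative ::
  "real \<Rightarrow> 'a::euclidean_space set \<Rightarrow> 'b::euclidean_space set \<Rightarrow> ((real \<Rightarrow> 'a) \<Rightarrow> (real \<Rightarrow> 'b)) set" where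
  "nonanticipative t0 U W = {\<gamma>.
     (\<forall>u\<in>admissible U. \<gamma> u \<in> admissible W) \<and>
     (\<forall>u\<in>admissible U. \<forall>u'\<in>admissible U. \<forall>s.
        (\<forall>\<sigma>\<in>{t0..s}. u \<sigma> = u' \<sigma>) \<longrightarrow> (\<forall>\<sigma>\<in>{t0..s}. \<gamma> u \<sigma> = \<gamma> u' \<sigma>))}"

definition xi_g ::
  "('r::euclidean_space \<Rightarrow> 'a \<Rightarrow> 'b \<Rightarrow> 'c \<Rightarrow> 'r) \<Rightarrow> real \<Rightarrow> 'r \<Rightarrow> real \<Rightarrow>
    (real \<Rightarrow> 'a) \<Rightarrow> (real \<Rightarrow> 'b) \<Rightarrow> (real \<Rightarrow> 'c) \<Rightarrow> 'r" where
  "xi_g g s r t0 us up d =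
     (THE x. (\<forall>\<sigma>\<ge>t0. ((\<lambda>\<theta>. g (x \<theta>) (us \<theta>) (up \<theta>) (d \<theta>)) has_integral (x \<sigma> - r)) {t0..\<sigma>})
           \<and> (\<forall>\<sigma><t0. x \<sigma> = r)) s"

definition value_fn ::
  "('r::euclidean_space \<Rightarrow> 'us::euclidean_space \<Rightarrow> 'up::euclidean_space \<Rightarrow> 'd::euclidean_space \<Rightarrow> 'r)
    \<Rightarrow> ('r \<Rightarrow> real) \<Rightarrow> 'us set \<Rightarrow> 'up set \<Rightarrow> 'd set \<Rightarrow> 'r \<Rightarrow> real \<Rightarrow> real" where
  "value_fn g l Us Up D r \<tau> =
     (SUP \<gamma>p\<in>nonanticipative 0 Us Up. SUP \<gamma>d\<in>nonanticipative 0 Us D.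
        INF us\<in>admissible Us. SUP s\<in>{0..\<tau>}. l (xi_g g s r 0 us (\<gamma>p us) (\<gamma>d us)))"

definition teb :: "('r \<Rightarrow> real \<Rightarrow> real) \<Rightarrow> real \<Rightarrow> real \<Rightarrow> real \<Rightarrow> 'r set" where
  "teb V T Vlow \<tau> = {r. V r (T - \<tau>) \<le> Vlow}"

end

theory Submission
  imports Defs
begin

text \<open>Along an optimal trajectory the remaining value is the maximum of l over a shrinking
  final segment of one and the same trajectory (time consistency), so it can only decrease;
  hence a state whose value is at most the minimum of V(-,T) stays in the tracking error bound.\<close>

lemma cSUP_subset_mono_of_max:
  fixes f :: "'a \<Rightarrow> 'b::conditionally_complete_lattice"
  assumes "B \<noteq> {}" "B \<subseteq> A" "m \<in> A" "\<forall>x\<in>A. f x \<le> f m"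
  shows "(SUP x\<in>B. f x) \<le> (SUP x\<in>A. f x)"
proof -
  have "bdd_above (f ` A)"
    using assms(4) by (auto intro: bdd_aboveI[where M = "f m"])
  then show ?thesis
    using assms(1,2) by (intro cSUP_subset_mono) auto
qed

lemma value_along_consistent_trajectory_decreasing:
  fixes V :: "'r \<Rightarrow> real \<Rightarrow> real" and l :: "'r \<Rightarrow> real" and xs :: "real \<Rightarrow> 'r \<Rightarrow> real \<Rightarrow> 'r"
  assumes V_eq_SUP: "\<forall>r. \<forall>t\<in>{0..T}. V r (T - t) = (SUP s\<in>{t..T}. l (xs s r t))"
    and max_exists: "\<forall>r. \<forall>t\<in>{0..T}. \<exists>s\<in>{t..T}. \<forall>s'\<in>{t..T}. l (xs s' r t) \<le> l (xs s r t)"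
    and consistent: "\<forall>r t t' s. 0 \<le> t \<and> t \<le> t' \<and> t' \<le> s \<and> s \<le> T \<longrightarrow> xs s r t = xs s (xs t' r t) t'"
    and t: "t \<in> {0..T}" and t': "t' \<in> {t..T}"
  shows "V (xs t' r t) (T - t') \<le> V r (T - t)"
proof -
  have "V (xs t' r t) (T - t') = (SUP s\<in>{t'..T}. l (xs s (xs t' r t) t'))"
    using V_eq_SUP t t' by auto
  also have "\<dots> = (SUP s\<in>{t'..T}. l (xs s r t))"
    using consistent t t' by (intro SUP_cong) auto
  also have "\<dots> \<le> (SUP s\<in>{t..T}. l (xs s r t))"
  proof -
    obtain m where "m \<in> {t..T}" "\<forall>s\<in>{t..T}. l (xs s r t) \<le> l (xs m r t)"
      using max_exists t by blast
    then show ?thesis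
      using t' by (intro cSUP_subset_mono_of_max) auto
  qed
  also have "\<dots> = V r (T - t)"
    using V_eq_SUP t by simp
  finally show ?thesis .
qed

theorem proposition1:
  fixes g :: "'r::euclidean_space \<Rightarrow> 'us::euclidean_space \<Rightarrow> 'up::euclidean_space \<Rightarrow> 'd::euclidean_space \<Rightarrow> 'r"
    and Us :: "'us set" and Up :: "'up set" and D :: "'d set"
    and l :: "'r \<Rightarrow> real" and T :: real
    and xs :: "real \<Rightarrow> 'r \<Rightarrow> real \<Rightarrow> 'r"
  assumes T_pos: "0 < T"
    and compact_sets: "compact Us" "compact Up" "compact D"
    and nonempty_sets: "Us \<noteq> {}" "Up \<noteq> {}" "D \<noteq> {}"
    and lipschitz_g: "\<forall>u p d. \<exists>L. L-lipschitz_on UNIV (\<lambda>x. g x u p d)"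
    and l_cont: "continuous_on UNIV l"
    and min_attained: "\<exists>r0. \<forall>r. value_fn g l Us Up D r0 T \<le> value_fn g l Us Up D r T"
    and xs_start: "\<forall>r. \<forall>t\<in>{0..T}. xs t r t = r"
    and xs_max_exists: "\<forall>r. \<forall>t\<in>{0..T}. \<exists>s\<in>{t..T}. \<forall>s'\<in>{t..T}. l (xs s' r t) \<le> l (xs s r t)"
    and xs_value: "\<forall>r. \<forall>t\<in>{0..T}. value_fn g l Us Up D r (T - t) = (SUP s\<in>{t..T}. l (xs s r t))"
    and xs_consistent: "\<forall>r t t' s. 0 \<le> t \<and> t \<le> t' \<and> t' \<le> s \<and> s \<le> T \<longrightarrow> xs s r t = xs s (xs t' r t) t'"
  shows "\<forall>t\<in>{0..T}. \<forall>t'\<in>{t..T}. \<forall>r.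
           r \<in> teb (value_fn g l Us Up D) T (INF r. value_fn g l Us Up D r T) t
           \<longrightarrow> xs t' r t \<in> teb (value_fn g l Us Up D) T (INF r. value_fn g l Us Up D r T) t'"
proof (intro ballI allI impI)
  fix t t' r
  assume "t \<in> {0..T}" "t' \<in> {t..T}"
    and "r \<in> teb (value_fn g l Us Up D) T (INF r. value_fn g l Us Up D r T) t"
  moreover have "value_fn g l Us Up D (xs t' r t) (T - t') \<le> value_fn g l Us Up D r (T - t)"
    using xs_value xs_max_exists xs_consistent \<open>t \<in> {0..T}\<close> \<open>t' \<in> {t..T}\<close>
    by (rule value_along_consistent_trajectory_decreasing)
  ultimately show "xs t' r t \<in> teb (value_fn g l Us Up D) T (INF r. value_fn g l Us Up D r T) t'"
    by (simp add: teb_def)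
qed

end
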